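(* Let $\Psi$ be a context all of whose variables have level $<k$, and let $n\in\mathbb{N}$. If $\cdot\vdash\Psi^k\ \mathsf{ctx}$, then $\cdot\vdash(\lfloor\Psi\rfloor_n)^k\ \mathsf{ctx}$.
   Context: Multi-level contextual LF. Every variable $x^n$ carries a level $n\in\mathbb{N}$. Syntax: sorts $s ::= \mathsf{type}\mid\mathsf{kind}$; atomic types $P ::= s \mid \mathsf{a} \mid P\,(\hat\Gamma.N)$; types $A,B,K ::= P \mid \Pi x^n{:}A[\Phi^n].B$; atomic terms $R ::= x^n[\sigma] \mid \mathsf{c} \mid R\,(\hat\Gamma.N)$; normal terms $M,N ::= R \mid \lambda x^n.M$; substitutions $\sigma ::= \cdot \mid \sigma,\hat\Gamma^n.M \mid \sigma, x^n$ (the last is a renaming entry); contexts $\Psi,\Phi,\Gamma ::= \cdot \mid \Psi, x^n{:}A[\Phi^n]$. Constants $\mathsf a,\mathsf c$ come from a fixed signature $\Sigma$; $\hat\Gamma$ is the list of variable names of $\Gamma$. $\Phi^n$ indicates that all variables of $\Phi$ have level $<n$. Merging: $\cdot\oplus\Phi=\Phi$; $\Psi\oplus\cdot=\Psi$; $(\Psi,x^n{:}A[\Gamma^n])\oplus(\Phi,y^k{:}B[\Gamma'^k]) = ((\Psi,x^n{:}A[\Gamma^n])\oplus\Phi), y^k{:}B[\Gamma'^k]$ if $k\le n$, and $=(\Psi\oplus(\Phi,y^k{:}B[\Gamma'^k])),x^n{:}A[\Gamma^n]$ otherwise. Chopping: $\lfloor\cdot\rfloor_n=\cdot$; $\lfloor\Psi,x^k{:}A[\Phi^k]\rfloor_n=\lfloor\Psi\rfloor_n$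 if $k<n$, and $=\Psi,x^k{:}A[\Phi^k]$ otherwise. Context well-formedness $\Psi\vdash\Phi^n\ \mathsf{ctx}$: $\Psi\vdash\cdot\ \mathsf{ctx}$; and $\Psi\vdash \Phi^n,x^k{:}A[\Gamma^k]\ \mathsf{ctx}$ (for $k<n$) if $\Psi\vdash\Phi^n\ \mathsf{ctx}$, $(\lfloor\Psi\rfloor_n\oplus\lfloor\Phi^n\rfloor_k)\oplus\Gamma^k\vdash A\Leftarrow\mathsf{type}$ and $\lfloor\Psi\rfloor_n\oplus\lfloor\Phi^n\rfloor_k\vdash\Gamma^k\ \mathsf{ctx}$. The remaining (bidirectional) judgments, defined mutually: $\Psi\vdash\mathsf{type}\Leftarrow\mathsf{kind}$; $\Psi\vdash P\Leftarrow\mathsf{type}$ if $\Psi\vdash P\Rightarrow\mathsf{type}$; $\Psi\vdash\Pi x^n{:}A[\Phi^n].B\Leftarrow s$ if $\lfloor\Psi\rfloor_n\oplus\Phi^n\vdash A\Leftarrow\mathsf{type}$, $\Psi\vdash\Phi^n\ \mathsf{ctx}$ and $\Psi\oplus x^n{:}A[\Phi^n]\vdash B\Leftarrow s$; $\Psi\vdash\mathsf a\Rightarrow\Sigma(\mathsf a)$, $\Psi\vdash\mathsf c\Rightarrow\Sigma(\mathsf c)$; $\Psi\vdash P\,(\hat\Phi^n.N)\Rightarrow[\hat\Phi^n.N/x^n]K$ if $\Psi\vdash P\Rightarrow\Pi x^n{:}A[\Phi^n].K$ and $\lfloor\Psi\rfloor_n\oplus\Phi^n\vdash N\Leftarrow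 A$ (same rule for $R\,(\hat\Phi^n.N)$); $\Psi\vdash x^n[\sigma]\Rightarrow[\sigma]_{\Phi^n}A$ if $\Psi(x^n)=A[\Phi^n]$ and $\Psi\vdash\sigma\Leftarrow\Phi^n$; $\Psi\vdash R\Leftarrow Q$ if $\Psi\vdash R\Rightarrow P$ and $P=Q$; $\Psi\vdash\lambda x^n.M\Leftarrow\Pi x^n{:}A[\Phi^n].B$ if $\Psi\oplus x^n{:}A[\Phi^n]\vdash M\Leftarrow B$; $\Psi\vdash\cdot\Leftarrow\cdot$; $\Psi\vdash\sigma,\hat\Gamma^k.M\Leftarrow\Phi^n,x^k{:}A[\Gamma^k]$ if $\Psi\vdash\sigma\Leftarrow\Phi^n$ and $\lfloor\Psi\rfloor_k\oplus[\sigma]_{\Phi^n}(\Gamma^k)\vdash M\Leftarrow[\lfloor\sigma\rfloor_k\oplus\mathrm{id}(\hat\Gamma^k)]A$; $\Psi\vdash\sigma,y^k\Leftarrow\Phi^n,x^k{:}A[\Gamma^k]$ if $\Psi\vdash\sigma\Leftarrow\Phi^n$ and $\Psi(y^k)=[\sigma]_{\Phi^n}(A[\Gamma^k])$. Here $[\hat\Phi.N/x]$ and $[\sigma]$ are the (capture-avoiding, $\beta$-redex-eliminating) hereditary single and simultaneous substitutions, and $\lfloor\sigma\rfloor_k$, $\sigma\oplus\tau$, $\mathrm{id}(\hat\Gamma)$ are the analogous chopping, merging and identity operations on substitutions. *)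

theory Defs
  imports Main
begin

text \<open>A variable x^n is a pair (name, level).\<close>
type_synonym var = "nat \<times> nat"

abbreviation lvl :: "var \<Rightarrow> nat" where "lvl x \<equiv> snd x"

datatype sort = Typ | Knd

text \<open>atomic types P, types A, atomic terms R, normal terms M, substitutions, contexts.
  A hatted context is a list of variables (left to right).
  Substitutions and contexts are snoc-lists.\<close>
datatype atp = Srt sort | TCon string | TApp atp "var list" nm
and tp = TAt atp | Pi var tp ctx tp
and at = Var var sub | Con string | App at "var list" nm
and nm = Lam var nm | At at
and sub = SNil | SEx sub nat "var list" nm | SRen sub var
and ctx = CNil | CSnoc ctx var tp ctx

type_synonym sig = "string \<Rightarrow> tp option"

primrec hat :: "ctx \<Rightarrow> var list" where
  "hat CNil = []"
| "hat (CSnoc \<Gamma> x A \<Delta>) = hat \<Gamma> @ [x]"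

primrec clookup :: "ctx \<Rightarrow> var \<Rightarrow> (tp \<times> ctx) option" where
  "clookup CNil x = None"
| "clookup (CSnoc \<Gamma> y A \<Delta>) x = (if y = x then Some (A, \<Delta>) else clookup \<Gamma> x)"

fun cmerge :: "ctx \<Rightarrow> ctx \<Rightarrow> ctx" where
  "cmerge \<Psi> CNil = \<Psi>"
| "cmerge CNil \<Phi> = \<Phi>"
| "cmerge (CSnoc \<Psi> x A \<Gamma>) (CSnoc \<Phi> y B \<Gamma>') =
     (if lvl y \<le> lvl x then CSnoc (cmerge (CSnoc \<Psi> x A \<Gamma>) \<Phi>) y B \<Gamma>'
      else CSnoc (cmerge \<Psi> (CSnoc \<Phi> y B \<Gamma>')) x A \<Gamma>)"

primrec cchop :: "nat \<Rightarrow> ctx \<Rightarrow> ctx" where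
  "cchop n CNil = CNil"
| "cchop n (CSnoc \<Psi> x A \<Gamma>) = (if lvl x < n then cchop n \<Psi> else CSnoc \<Psi> x A \<Gamma>)"

text \<open>Merging / chopping of lists ordered left to right (last element = most recent),
  w.r.t. a level function; used for hatted contexts and substitutions.\<close>
fun rmerge :: "('a \<Rightarrow> nat) \<Rightarrow> 'a list \<Rightarrow> 'a list \<Rightarrow> 'a list" where
  "rmerge lv xs [] = xs"
| "rmerge lv [] ys = ys"
| "rmerge lv (x # xs) (y # ys) =
     (if lv y \<le> lv x then y # rmerge lv (x # xs) ys else x # rmerge lv xs (y # ys))"

definition lmerge :: "('a \<Rightarrow> nat) \<Rightarrow> 'a list \<Rightarrow> 'a list \<Rightarrow> 'a list" where
  "lmerge lv xs ys = rev (rmerge lv (rev xs) (rev ys))"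

definition lchop :: "('a \<Rightarrow> nat) \<Rightarrow> nat \<Rightarrow> 'a list \<Rightarrow> 'a list" where
  "lchop lv n xs = rev (dropWhile (\<lambda>x. lv x < n) (rev xs))"

datatype entry = EEx nat "var list" nm | ERn var

primrec ent_lvl :: "entry \<Rightarrow> nat" where
  "ent_lvl (EEx n G M) = n"
| "ent_lvl (ERn y) = lvl y"

primrec entries :: "sub \<Rightarrow> entry list" where
  "entries SNil = []"
| "entries (SEx \<sigma> n G M) = entries \<sigma> @ [EEx n G M]"
| "entries (SRen \<sigma> y) = entries \<sigma> @ [ERn y]"

definition of_entries :: "entry list \<Rightarrow> sub" where
  "of_entries es = foldl (\<lambda>\<sigma> e. case e of EEx n G M \<Rightarrow> SEx \<sigma> n G M | ERn y \<Rightarrow> SRen \<sigma> y) SNil es"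

definition schop :: "nat \<Rightarrow> sub \<Rightarrow> sub" where
  "schop k \<sigma> = of_entries (lchop ent_lvl k (entries \<sigma>))"

definition smerge :: "sub \<Rightarrow> sub \<Rightarrow> sub" where
  "smerge \<sigma> \<tau> = of_entries (lmerge ent_lvl (entries \<sigma>) (entries \<tau>))"

definition idsub :: "var list \<Rightarrow> sub" where
  "idsub G = of_entries (map ERn G)"

primrec vars_atp :: "atp \<Rightarrow> var set"
and vars_tp :: "tp \<Rightarrow> var set"
and vars_at :: "at \<Rightarrow> var set"
and vars_nm :: "nm \<Rightarrow> var set"
and vars_sub :: "sub \<Rightarrow> var set"
and vars_ctx :: "ctx \<Rightarrow> var set" where
  "vars_atp (Srt s) = {}"
| "vars_atp (TCon a) = {}"
| "vars_atp (TApp P G N) = vars_atp P \<union> set G \<union> vars_nm N"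
| "vars_tp (TAt P) = vars_atp P"
| "vars_tp (Pi x A \<Phi> B) = insert x (vars_tp A \<union> vars_ctx \<Phi> \<union> vars_tp B)"
| "vars_at (Var x \<sigma>) = insert x (vars_sub \<sigma>)"
| "vars_at (Con c) = {}"
| "vars_at (App R G N) = vars_at R \<union> set G \<union> vars_nm N"
| "vars_nm (Lam x M) = insert x (vars_nm M)"
| "vars_nm (At R) = vars_at R"
| "vars_sub SNil = {}"
| "vars_sub (SEx \<sigma> n G M) = vars_sub \<sigma> \<union> set G \<union> vars_nm M"
| "vars_sub (SRen \<sigma> y) = insert y (vars_sub \<sigma>)"
| "vars_ctx CNil = {}"
| "vars_ctx (CSnoc \<Gamma> x A \<Delta>) = vars_ctx \<Gamma> \<union> insert x (vars_tp A \<union> vars_ctx \<Delta>)"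

primrec vars_ent :: "entry \<Rightarrow> var set" where
  "vars_ent (EEx n G M) = set G \<union> vars_nm M"
| "vars_ent (ERn y) = {y}"

type_synonym smap = "(var \<times> entry) list"

definition fresh :: "smap \<Rightarrow> var set \<Rightarrow> bool" where
  "fresh \<theta> X \<longleftrightarrow> (\<forall>x\<in>X. x \<notin> fst ` set \<theta> \<and> (\<forall>e\<in>snd ` set \<theta>. x \<notin> vars_ent e))"

section \<open>Hereditary substitution (as a relation: graph of the partial operation)\<close>

inductive hs_atp :: "smap \<Rightarrow> atp \<Rightarrow> atp \<Rightarrow> bool"
and hs_tp :: "smap \<Rightarrow> tp \<Rightarrow> tp \<Rightarrow> bool"
and hs_at :: "smap \<Rightarrow> at \<Rightarrow> nm \<Rightarrow> bool"
and hs_nm :: "smap \<Rightarrow> nm \<Rightarrow> nm \<Rightarrow> bool"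
and hs_sub :: "smap \<Rightarrow> sub \<Rightarrow> sub \<Rightarrow> bool"
and hs_ctx :: "smap \<Rightarrow> ctx \<Rightarrow> ctx \<Rightarrow> bool" where
  hs_srt: "hs_atp \<theta> (Srt s) (Srt s)"
| hs_tcon: "hs_atp \<theta> (TCon a) (TCon a)"
| hs_tapp: "\<lbrakk> fresh \<theta> (set G); hs_atp \<theta> P P'; hs_nm \<theta> N N' \<rbrakk>
            \<Longrightarrow> hs_atp \<theta> (TApp P G N) (TApp P' G N')"
| hs_tat: "hs_atp \<theta> P P' \<Longrightarrow> hs_tp \<theta> (TAt P) (TAt P')"
| hs_pi: "\<lbrakk> fresh \<theta> (insert x (set (hat \<Phi>))); hs_tp \<theta> A A'; hs_ctx \<theta> \<Phi> \<Phi>'; hs_tp \<theta> B B' \<rbrakk>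
          \<Longrightarrow> hs_tp \<theta> (Pi x A \<Phi> B) (Pi x A' \<Phi>' B')"
| hs_var_out: "\<lbrakk> map_of \<theta> x = None; hs_sub \<theta> \<tau> \<tau>' \<rbrakk>
               \<Longrightarrow> hs_at \<theta> (Var x \<tau>) (At (Var x \<tau>'))"
| hs_var_ren: "\<lbrakk> map_of \<theta> x = Some (ERn y); hs_sub \<theta> \<tau> \<tau>' \<rbrakk>
               \<Longrightarrow> hs_at \<theta> (Var x \<tau>) (At (Var y \<tau>'))"
| hs_var_ex: "\<lbrakk> map_of \<theta> x = Some (EEx n G M); hs_sub \<theta> \<tau> \<tau>';
                length G = length (entries \<tau>'); hs_nm (zip G (entries \<tau>')) M M' \<rbrakk>
               \<Longrightarrow> hs_at \<theta> (Var x \<tau>) M'"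
| hs_con: "hs_at \<theta> (Con c) (At (Con c))"
| hs_app_at: "\<lbrakk> fresh \<theta> (set G); hs_at \<theta> R (At R'); hs_nm \<theta> N N' \<rbrakk>
              \<Longrightarrow> hs_at \<theta> (App R G N) (At (App R' G N'))"
| hs_app_beta: "\<lbrakk> fresh \<theta> (set G); hs_at \<theta> R (Lam x M); hs_nm \<theta> N N';
                  hs_nm [(x, EEx (lvl x) G N')] M M' \<rbrakk>
              \<Longrightarrow> hs_at \<theta> (App R G N) M'"
| hs_lam: "\<lbrakk> fresh \<theta> {x}; hs_nm \<theta> M M' \<rbrakk> \<Longrightarrow> hs_nm \<theta> (Lam x M) (Lam x M')"
| hs_nat: "hs_at \<theta> R M \<Longrightarrow> hs_nm \<theta> (At R) M"
| hs_snil: "hs_sub \<theta> SNil SNil"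
| hs_sex: "\<lbrakk> fresh \<theta> (set G); hs_sub \<theta> \<sigma> \<sigma>'; hs_nm \<theta> M M' \<rbrakk>
           \<Longrightarrow> hs_sub \<theta> (SEx \<sigma> n G M) (SEx \<sigma>' n G M')"
| hs_sren_out: "\<lbrakk> map_of \<theta> y = None; hs_sub \<theta> \<sigma> \<sigma>' \<rbrakk> \<Longrightarrow> hs_sub \<theta> (SRen \<sigma> y) (SRen \<sigma>' y)"
| hs_sren_ren: "\<lbrakk> map_of \<theta> y = Some (ERn z); hs_sub \<theta> \<sigma> \<sigma>' \<rbrakk> \<Longrightarrow> hs_sub \<theta> (SRen \<sigma> y) (SRen \<sigma>' z)"
| hs_sren_ex: "\<lbrakk> map_of \<theta> y = Some (EEx n G M); hs_sub \<theta> \<sigma> \<sigma>' \<rbrakk>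
               \<Longrightarrow> hs_sub \<theta> (SRen \<sigma> y) (SEx \<sigma>' n G M)"
| hs_cnil: "hs_ctx \<theta> CNil CNil"
| hs_csnoc: "\<lbrakk> fresh \<theta> (insert x (set (hat \<Delta>))); hs_ctx \<theta> \<Gamma> \<Gamma>'; hs_tp \<theta> A A'; hs_ctx \<theta> \<Delta> \<Delta>' \<rbrakk>
             \<Longrightarrow> hs_ctx \<theta> (CSnoc \<Gamma> x A \<Delta>) (CSnoc \<Gamma>' x A' \<Delta>')"

definition hsub_tp :: "sub \<Rightarrow> var list \<Rightarrow> tp \<Rightarrow> tp \<Rightarrow> bool" where
  "hsub_tp \<sigma> ds A A' \<longleftrightarrow> length ds = length (entries \<sigma>) \<and> hs_tp (zip ds (entries \<sigma>)) A A'"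

definition hsub_ctx :: "sub \<Rightarrow> var list \<Rightarrow> ctx \<Rightarrow> ctx \<Rightarrow> bool" where
  "hsub_ctx \<sigma> ds \<Gamma> \<Gamma>' \<longleftrightarrow> length ds = length (entries \<sigma>) \<and> hs_ctx (zip ds (entries \<sigma>)) \<Gamma> \<Gamma>'"

inductive wf_ctx :: "sig \<Rightarrow> ctx \<Rightarrow> nat \<Rightarrow> ctx \<Rightarrow> bool"
  \<comment> \<open>wf_ctx Sg Psi n Phi :  Psi |- Phi^n ctx\<close>
and chk_tp :: "sig \<Rightarrow> ctx \<Rightarrow> tp \<Rightarrow> sort \<Rightarrow> bool"
and syn_atp :: "sig \<Rightarrow> ctx \<Rightarrow> atp \<Rightarrow> tp \<Rightarrow> bool"
and syn_at :: "sig \<Rightarrow> ctx \<Rightarrow> at \<Rightarrow> tp \<Rightarrow> bool"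
and chk_nm :: "sig \<Rightarrow> ctx \<Rightarrow> nm \<Rightarrow> tp \<Rightarrow> bool"
and chk_sub :: "sig \<Rightarrow> ctx \<Rightarrow> sub \<Rightarrow> ctx \<Rightarrow> bool"
for Sg :: sig where
  wf_nil: "wf_ctx Sg \<Psi> n CNil"
| wf_snoc: "\<lbrakk> lvl x < n; wf_ctx Sg \<Psi> n \<Phi>;
              chk_tp Sg (cmerge (cmerge (cchop n \<Psi>) (cchop (lvl x) \<Phi>)) \<Gamma>) A Typ;
              wf_ctx Sg (cmerge (cchop n \<Psi>) (cchop (lvl x) \<Phi>)) (lvl x) \<Gamma> \<rbrakk>
            \<Longrightarrow> wf_ctx Sg \<Psi> n (CSnoc \<Phi> x A \<Gamma>)"
| ck_type: "chk_tp Sg \<Psi> (TAt (Srt Typ)) Knd"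
| ck_atp: "syn_atp Sg \<Psi> P (TAt (Srt Typ)) \<Longrightarrow> chk_tp Sg \<Psi> (TAt P) Typ"
| ck_pi: "\<lbrakk> chk_tp Sg (cmerge (cchop (lvl x) \<Psi>) \<Phi>) A Typ; wf_ctx Sg \<Psi> (lvl x) \<Phi>;
            chk_tp Sg (cmerge \<Psi> (CSnoc CNil x A \<Phi>)) B s \<rbrakk>
          \<Longrightarrow> chk_tp Sg \<Psi> (Pi x A \<Phi> B) s"
| sy_tcon: "Sg a = Some K \<Longrightarrow> syn_atp Sg \<Psi> (TCon a) K"
| sy_tapp: "\<lbrakk> syn_atp Sg \<Psi> P (Pi x A \<Phi> K); chk_nm Sg (cmerge (cchop (lvl x) \<Psi>) \<Phi>) N A;
              hs_tp [(x, EEx (lvl x) (hat \<Phi>) N)] K K' \<rbrakk>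
            \<Longrightarrow> syn_atp Sg \<Psi> (TApp P (hat \<Phi>) N) K'"
| sy_con: "Sg c = Some A \<Longrightarrow> syn_at Sg \<Psi> (Con c) A"
| sy_app: "\<lbrakk> syn_at Sg \<Psi> R (Pi x A \<Phi> K); chk_nm Sg (cmerge (cchop (lvl x) \<Psi>) \<Phi>) N A;
             hs_tp [(x, EEx (lvl x) (hat \<Phi>) N)] K K' \<rbrakk>
           \<Longrightarrow> syn_at Sg \<Psi> (App R (hat \<Phi>) N) K'"
| sy_var: "\<lbrakk> clookup \<Psi> x = Some (A, \<Phi>); chk_sub Sg \<Psi> \<sigma> \<Phi>; hsub_tp \<sigma> (hat \<Phi>) A A' \<rbrakk>
           \<Longrightarrow> syn_at Sg \<Psi> (Var x \<sigma>) A'"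
| ck_at: "syn_at Sg \<Psi> R (TAt P) \<Longrightarrow> chk_nm Sg \<Psi> (At R) (TAt P)"
| ck_lam: "chk_nm Sg (cmerge \<Psi> (CSnoc CNil x A \<Phi>)) M B \<Longrightarrow> chk_nm Sg \<Psi> (Lam x M) (Pi x A \<Phi> B)"
| cs_nil: "chk_sub Sg \<Psi> SNil CNil"
| cs_ex: "\<lbrakk> chk_sub Sg \<Psi> \<sigma> \<Phi>; hsub_ctx \<sigma> (hat \<Phi>) \<Gamma> \<Gamma>';
            hsub_tp (smerge (schop (lvl x) \<sigma>) (idsub (hat \<Gamma>)))
                    (lmerge lvl (lchop lvl (lvl x) (hat \<Phi>)) (hat \<Gamma>)) A A';
            chk_nm Sg (cmerge (cchop (lvl x) \<Psi>) \<Gamma>') M A' \<rbrakk>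
          \<Longrightarrow> chk_sub Sg \<Psi> (SEx \<sigma> (lvl x) (hat \<Gamma>) M) (CSnoc \<Phi> x A \<Gamma>)"
| cs_ren: "\<lbrakk> chk_sub Sg \<Psi> \<sigma> \<Phi>; lvl y = lvl x; clookup \<Psi> y = Some (A', \<Gamma>');
             fresh (zip (hat \<Phi>) (entries \<sigma>)) (set (hat \<Gamma>));
             hsub_tp \<sigma> (hat \<Phi>) A A'; hsub_ctx \<sigma> (hat \<Phi>) \<Gamma> \<Gamma>' \<rbrakk>
           \<Longrightarrow> chk_sub Sg \<Psi> (SRen \<sigma> y) (CSnoc \<Phi> x A \<Gamma>)"

end

theory Submission
  imports Defs
begin

text \<open>Chopping a context only drops trailing entries, so it yields a prefix of the context,
  and every prefix of a well-formed context is well-formed: the last rule of a well-formedness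
  derivation for a nonempty context has the derivation for its prefix as a premise.\<close>

lemma wf_ctx_snocD: "wf_ctx Sg \<Psi> n (CSnoc \<Phi> x A \<Gamma>) \<Longrightarrow> wf_ctx Sg \<Psi> n \<Phi>"
  by (erule wf_ctx.cases) auto

lemma wf_ctx_cchop: "wf_ctx Sg \<Psi> n \<Phi> \<Longrightarrow> wf_ctx Sg \<Psi> n (cchop m \<Phi>)"
  by (induction \<Phi> rule: ctx.induct[where ?P1.0="\<lambda>_. True" and ?P2.0="\<lambda>_. True"
        and ?P3.0="\<lambda>_. True" and ?P4.0="\<lambda>_. True" and ?P5.0="\<lambda>_. True"])
     (auto dest: wf_ctx_snocD)

theorem mainTheorem4:
  fixes Sg :: sig and \<Psi> :: ctx and k n :: nat
  assumes "\<forall>x \<in> set (hat \<Psi>). lvl x < k"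
    and "wf_ctx Sg CNil k \<Psi>"
  shows "wf_ctx Sg CNil k (cchop n \<Psi>)"
  using assms(2) by (rule wf_ctx_cchop)

end
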